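(* Consider any fair, well-formed execution of COP as described in the context, with history $\sigma$ (and $S$ correct or Byzantine). For each client $C_i$, the sequence $\pi_i$ defined in the context preserves the real-time order of $\sigma$: for any two operations $o,o'$ in $\pi_i$, if $o$ completes before $o'$ is invoked in $\sigma$, then $o$ appears before $o'$ in $\pi_i$.
   Context: System model. Clients $C_1,\dots,C_n$ and server $S$ in an asynchronous system, each client connected to $S$ by a reliable FIFO channel; clients are correct; $S$ is correct or Byzantine (may send arbitrary messages). Executions are fair and well-formed. Functionality. $F$ is deterministic over states $\mathcal{S}$, operations $\mathcal{O}$, responses $\mathcal{R}$: $F(s,o)=(s',r)$, extended to sequences by applying operations in order. $\mathrm{commute}_F(s,\rho_1,\rho_2)$ is true iff every interleaving of sequences $\rho_1,\rho_2$ (preserving each one's internal order) executed from $s$ yields the same final state and the same respective responses. Cryptography (ideal). $\mathrm{hash}$ is ideal collision-free; $\mathrm{sign}_i$ is invocable only by $C_i$ and $\mathrm{verify}_i(\phi,m)$ is true iff $C_i$ previously executed $\mathrm{sign}_i(m)$ obtaining $\phi$. $\|$ is concatenation. COP client $C_i$. State: $u$ (initially $\bot$); $c$ (initially $0$); map $H$ with $H[0]=\mathrm{null}$; map $Z$ to $\{\mathrm{success},\mathrm{abort}\}$; state $s$ (initially $s_0$). (1) On invocation of $o$: $u\leftarrow o$, send $\langle\mathrm{invoke},o,c,\mathrm{sign}_i(\mathrm{invoke}\|o\|i)\rangle$ to $S$. (2) On $\langle\mathrm{reply},\omega\rangle$: $\gamma,\mu\leftarrow\langle\rangle$. For $k=1,\dots,\mathrm{length}(\omega)$: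 $(o,j,\tau)=\omega[k]$, $l=c+k$; halt if $\mathrm{verify}_j(\tau,\mathrm{invoke}\|o\|j)$ fails; if $H[l]$ undefined set $H[l]\leftarrow\mathrm{hash}(H[l-1]\|o\|l\|j)$, else halt if $H[l]\neq\mathrm{hash}(H[l-1]\|o\|l\|j)$; if $j=i$ and $Z[l]=\mathrm{success}$ append $o$ to $\mu$, else if $j\neq i$ append $o$ to $\gamma$. Halt if $\omega$ is empty or its last entry has operation $\neq u$ or index $\neq i$. $(a,r)\leftarrow F(s,\mu)$. If $\mathrm{commute}_F(a,\langle u\rangle,\gamma)$: $(a,r)\leftarrow F(a,u)$, $Z[l]\leftarrow\mathrm{success}$; else $r\leftarrow\bot$, $Z[l]\leftarrow\mathrm{abort}$. Send $\langle\mathrm{commit},u,l,H[l],Z[l],\mathrm{sign}_i(\mathrm{commit}\|u\|l\|H[l]\|Z[l])\rangle$ to $S$, set $u\leftarrow\bot$, output $r$. (3) On $\langle\mathrm{broadcast},o,q,h,z,\phi,j\rangle$: halt unless $q=c+1$ and $\mathrm{verify}_j(\phi,\mathrm{commit}\|o\|q\|h\|z)$; if $H[q]$ undefined set $H[q]\leftarrow\mathrm{hash}(H[q-1]\|o\|q\|j)$; halt if $h\neq H[q]$; if $z=\mathrm{success}$, $(s,\cdot)\leftarrow F(s,o)$; $c\leftarrow c+1$. COP server $S$ (when correct). State $t=0$, $b=0$, maps $I,O$ empty. On $\langle\mathrm{invoke},o,c,\tau\rangle$ from $C_i$: $t\leftarrow t+1$, $I[t]\leftarrow(o,i,\tau)$,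 send $\langle\mathrm{reply},\langle I[c+1],\dots,I[t]\rangle\rangle$ to $C_i$. On $\langle\mathrm{commit},o,q,h,z,\phi\rangle$ from $C_i$: $O[q]\leftarrow(o,h,z,\phi,i)$; while $O[b+1]$ defined: $b\leftarrow b+1$, send $\langle\mathrm{broadcast},o',b,h',z',\phi',j\rangle$ to all clients where $(o',h',z',\phi',j)=O[b]$. Terminology. The history $\sigma$ is the sequence of invocation/response events at the clients. $C_i$ commits $o$ when it issues the commit signature in step (2); the value $l$ there is the sequence number of $o$. A client confirms $o$ when it processes a broadcast message for $o$ in step (3) passing all checks. Definition of $\pi_i$: let $o$ be the operation committed by $C_i$ with the highest sequence number among those operations of $C_i$ that have been confirmed by some client $C_k$ (possibly $C_k=C_i$); let $\alpha_i$ be the sequence of operations confirmed by $C_k$ up to and including $o$; let $\beta_i$ be the sequence of operations committed by $C_i$ with sequence number higher than that of $o$, in order of sequence number; $\pi_i=\alpha_i\circ\beta_i$ (concatenation). *)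

theory Defs
  imports Main
begin

datatype zflag = Success | Abort

(* ideal collision-free hash: hash(H[l-1] || p || l || j) is the injective term Hash prev p l j *)
datatype 'op hv = HNull | Hash "'op hv" 'op nat nat

(* signed messages: invoke||p||i  and  commit||p||l||h||z *)
datatype 'op smsg = SInvoke 'op nat | SCommit 'op nat "'op hv" zflag

(* ideal signatures: a signature value is a term Sig j m *)
datatype 'op sig = Sig nat "'op smsg"

(* verify_j(phi,m) is true iff C_j previously executed sign_j(m) obtaining phi;
   sg is the set of (signer, message) pairs signed before the current event *)
definition verify :: "(nat \<times> 'op smsg) set \<Rightarrow> nat \<Rightarrow> 'op sig \<Rightarrow> 'op smsg \<Rightarrow> bool" where
  "verify sg j phi m \<longleftrightarrow> phi = Sig j m \<and> (j, m) \<in> sg"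

fun F_seq :: "('s \<Rightarrow> 'op \<Rightarrow> 's \<times> 'r) \<Rightarrow> 's \<Rightarrow> 'op list \<Rightarrow> 's" where
  "F_seq F s [] = s"
| "F_seq F s (p # os) = F_seq F (fst (F s p)) os"

fun run_tagged :: "('s \<Rightarrow> 'op \<Rightarrow> 's \<times> 'r) \<Rightarrow> 's \<Rightarrow> ('op + 'op) list \<Rightarrow> 's \<times> 'r list \<times> 'r list" where
  "run_tagged F s [] = (s, [], [])"
| "run_tagged F s (Inl p # xs) =
     (let (s', r) = F s p; (s'', r1, r2) = run_tagged F s' xs in (s'', r # r1, r2))"
| "run_tagged F s (Inr p # xs) =
     (let (s', r) = F s p; (s'', r1, r2) = run_tagged F s' xs in (s'', r1, r # r2))"

definition commute :: "('s \<Rightarrow> 'op \<Rightarrow> 's \<times> 'r) \<Rightarrow> 's \<Rightarrow> 'op list \<Rightarrow> 'op list \<Rightarrow> bool" where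
  "commute F s \<rho>1 \<rho>2 \<longleftrightarrow>
     (\<forall>x \<in> shuffles (map Inl \<rho>1) (map Inr \<rho>2). \<forall>y \<in> shuffles (map Inl \<rho>1) (map Inr \<rho>2).
        run_tagged F s x = run_tagged F s y)"

(* ===== Events at clients (the server may be Byzantine: it may send arbitrary messages) ===== *)

datatype 'op ev =
    Invoke nat 'op
  | Reply nat "('op \<times> nat \<times> 'op sig) list"
  | Broadcast nat 'op nat "'op hv" zflag "'op sig" nat      (* C_i receives <broadcast,p,q,h,z,phi,j> *)

fun ev_client :: "'op ev \<Rightarrow> nat" where
  "ev_client (Invoke i _) = i"
| "ev_client (Reply i _) = i"
| "ev_client (Broadcast i _ _ _ _ _ _) = i"

fun inv_op :: "'op ev \<Rightarrow> 'op option" where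
  "inv_op (Invoke _ p) = Some p"
| "inv_op _ = None"

(* what a client step does, observably:
   AInv p              invocation event of p (in the history);
   ACommit p r l h z   client commits p with sequence number l and outputs response r (None = bottom);
   AConfirm p q j      client confirms p (broadcast passing all checks);
   ANone               nothing (e.g. client halts / is halted) *)
datatype ('op, 'r) act = AInv 'op | ACommit 'op "'r option" nat "'op hv" zflag
  | AConfirm 'op nat nat | ANone

record ('op, 's) cst =
  cu :: "'op option"
  cc :: nat
  cH :: "nat \<Rightarrow> 'op hv option"
  cZ :: "nat \<Rightarrow> zflag option"
  cs :: 's
  chalt :: bool

definition init_cst :: "'s \<Rightarrow> ('op, 's) cst" where
  "init_cst s0 = \<lparr>cu = None, cc = 0, cH = [0 \<mapsto> HNull], cZ = Map.empty, cs = s0, chalt = False\<rparr>"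

(* the loop of step (2): entries of omega starting at position l; None = halt;
   result: updated H, gamma, mu *)
fun rloop :: "(nat \<times> 'op smsg) set \<Rightarrow> nat \<Rightarrow> nat \<Rightarrow> (nat \<Rightarrow> 'op hv option) \<Rightarrow> (nat \<Rightarrow> zflag option)
      \<Rightarrow> ('op \<times> nat \<times> 'op sig) list \<Rightarrow> ((nat \<Rightarrow> 'op hv option) \<times> 'op list \<times> 'op list) option" where
  "rloop sg i l H Z [] = Some (H, [], [])"
| "rloop sg i l H Z ((p, j, \<tau>) # rest) =
     (if \<not> verify sg j \<tau> (SInvoke p j) then None
      else (let hx = Hash (the (H (l - 1))) p l j in
        if H l \<noteq> None \<and> H l \<noteq> Some hx then None
        else (let H' = (if H l = None then H(l \<mapsto> hx) else H) in
          (case rloop sg i (Suc l) H' Z rest of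
             None \<Rightarrow> None
           | Some (H'', \<gamma>, \<mu>) \<Rightarrow>
               Some (H'', if j \<noteq> i then p # \<gamma> else \<gamma>,
                          if j = i \<and> Z l = Some Success then p # \<mu> else \<mu>)))))"

(* one step of a COP client: new state, observable action, messages signed in this step *)
definition cstep :: "('s \<Rightarrow> 'op \<Rightarrow> 's \<times> 'r) \<Rightarrow> (nat \<times> 'op smsg) set \<Rightarrow> 'op ev \<Rightarrow> ('op, 's) cst
      \<Rightarrow> ('op, 's) cst \<times> ('op, 'r) act \<times> 'op smsg list" where
  "cstep F sg e st =
    (let halt = (st\<lparr>chalt := True\<rparr>, ANone, []) in
     if chalt st then
       (case e of Invoke i p \<Rightarrow> (st\<lparr>cu := Some p\<rparr>, AInv p, []) | _ \<Rightarrow> (st, ANone, []))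
     else (case e of
       Invoke i p \<Rightarrow> (st\<lparr>cu := Some p\<rparr>, AInv p, [SInvoke p i])
     | Reply i \<omega> \<Rightarrow>
         (case rloop sg i (Suc (cc st)) (cH st) (cZ st) \<omega> of
            None \<Rightarrow> halt
          | Some (H', \<gamma>, \<mu>) \<Rightarrow>
              (if \<omega> = [] \<or> Some (fst (last \<omega>)) \<noteq> cu st \<or> fst (snd (last \<omega>)) \<noteq> i then halt
               else (let u = the (cu st); l = cc st + length \<omega>; a = F_seq F (cs st) \<mu> in
                 if commute F a [u] \<gamma> then
                   (st\<lparr>cH := H', cZ := (cZ st)(l \<mapsto> Success), cu := None\<rparr>,
                    ACommit u (Some (snd (F a u))) l (the (H' l)) Success,
                    [SCommit u l (the (H' l)) Success])
                 else
                   (st\<lparr>cH := H', cZ := (cZ st)(l \<mapsto> Abort), cu := None\<rparr>,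
                    ACommit u None l (the (H' l)) Abort,
                    [SCommit u l (the (H' l)) Abort]))))
     | Broadcast i p q h z \<phi> j \<Rightarrow>
         (if q = Suc (cc st) \<and> verify sg j \<phi> (SCommit p q h z) then
            (let H' = (if cH st q = None then (cH st)(q \<mapsto> Hash (the (cH st (q - 1))) p q j) else cH st) in
             if H' q \<noteq> Some h then halt
             else (st\<lparr>cH := H', cs := (if z = Success then fst (F (cs st) p) else cs st),
                      cc := Suc (cc st)\<rparr>, AConfirm p q j, []))
          else halt)))"

(* executing a (finite) sequence of client events; records (event, client state before, action) *)
fun runs :: "('s \<Rightarrow> 'op \<Rightarrow> 's \<times> 'r) \<Rightarrow> (nat \<Rightarrow> ('op, 's) cst) \<Rightarrow> (nat \<times> 'op smsg) set \<Rightarrow> 'op ev list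
      \<Rightarrow> ('op ev \<times> ('op, 's) cst \<times> ('op, 'r) act) list" where
  "runs F st sg [] = []"
| "runs F st sg (e # es) =
     (let i = ev_client e; (st', a, ms) = cstep F sg e (st i) in
      (e, st i, a) # runs F (st(i := st')) (sg \<union> (\<lambda>m. (i, m)) ` set ms) es)"

definition trace :: "('s \<Rightarrow> 'op \<Rightarrow> 's \<times> 'r) \<Rightarrow> 's \<Rightarrow> 'op ev list \<Rightarrow> ('op ev \<times> ('op, 's) cst \<times> ('op, 'r) act) list" where
  "trace F s0 E = runs F (\<lambda>_. init_cst s0) {} E"

definition well_formed :: "nat \<Rightarrow> 'op ev list \<Rightarrow> ('op ev \<times> ('op, 's) cst \<times> ('op, 'r) act) list \<Rightarrow> bool" where
  "well_formed n E T \<longleftrightarrow>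
     (\<forall>e \<in> set E. ev_client e \<in> {1..n}) \<and>
     (\<forall>(e, st, a) \<in> set T. inv_op e \<noteq> None \<longrightarrow> cu st = None) \<and>
     distinct (List.map_filter inv_op E)"

fun commit_of :: "('op, 'r) act \<Rightarrow> ('op \<times> nat) option" where
  "commit_of (ACommit p r l h z) = Some (p, l)"
| "commit_of _ = None"

fun conf_of :: "('op, 'r) act \<Rightarrow> ('op \<times> nat \<times> nat) option" where
  "conf_of (AConfirm p q j) = Some (p, q, j)"
| "conf_of _ = None"

definition commits :: "('op ev \<times> ('op, 's) cst \<times> ('op, 'r) act) list \<Rightarrow> nat \<Rightarrow> ('op \<times> nat) list" where
  "commits T i = List.map_filter (\<lambda>(e, st, a). if ev_client e = i then commit_of a else None) T"

definition confs :: "('op ev \<times> ('op, 's) cst \<times> ('op, 'r) act) list \<Rightarrow> nat \<Rightarrow> ('op \<times> nat \<times> nat) list" where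
  "confs T k = List.map_filter (\<lambda>(e, st, a). if ev_client e = k then conf_of a else None) T"

definition confirmed_by :: "('op ev \<times> ('op, 's) cst \<times> ('op, 'r) act) list \<Rightarrow> nat \<Rightarrow> 'op \<Rightarrow> bool" where
  "confirmed_by T k p \<longleftrightarrow> p \<in> set (map fst (confs T k))"

definition conf_commits :: "('op ev \<times> ('op, 's) cst \<times> ('op, 'r) act) list \<Rightarrow> nat \<Rightarrow> ('op \<times> nat) set" where
  "conf_commits T i = {(p, l). (p, l) \<in> set (commits T i) \<and> (\<exists>k. confirmed_by T k p)}"

(* pi_seq T i pi: pi is (a valid choice of) the sequence pi_i *)
definition pi_seq :: "('op ev \<times> ('op, 's) cst \<times> ('op, 'r) act) list \<Rightarrow> nat \<Rightarrow> 'op list \<Rightarrow> bool" where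
  "pi_seq T i \<pi> \<longleftrightarrow>
     (\<exists>p l k. (p, l) \<in> conf_commits T i \<and> (\<forall>(p', l') \<in> conf_commits T i. l' \<le> l) \<and>
        confirmed_by T k p \<and>
        \<pi> = (takeWhile (\<lambda>x. x \<noteq> p) (map fst (confs T k)) @ [p])
            @ map fst (sort_key snd (filter (\<lambda>(p', l'). l < l') (commits T i))))
   \<or> (conf_commits T i = {} \<and> \<pi> = map fst (sort_key snd (commits T i)))"

(* history sigma: invocation events and response (completion) events *)
definition inv_at :: "('op ev \<times> ('op, 's) cst \<times> ('op, 'r) act) list \<Rightarrow> nat \<Rightarrow> 'op \<Rightarrow> bool" where
  "inv_at T t p \<longleftrightarrow> t < length T \<and> snd (snd (T ! t)) = AInv p"

definition resp_at :: "('op ev \<times> ('op, 's) cst \<times> ('op, 'r) act) list \<Rightarrow> nat \<Rightarrow> 'op \<Rightarrow> bool" where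
  "resp_at T t p \<longleftrightarrow> t < length T \<and> (\<exists>r l h z. snd (snd (T ! t)) = ACommit p r l h z)"

definition rt_before :: "('op ev \<times> ('op, 's) cst \<times> ('op, 'r) act) list \<Rightarrow> 'op \<Rightarrow> 'op \<Rightarrow> bool" where
  "rt_before T p p' \<longleftrightarrow> (\<exists>t t'. t < t' \<and> resp_at T t p \<and> inv_at T t' p')"

definition appears_before :: "'op list \<Rightarrow> 'op \<Rightarrow> 'op \<Rightarrow> bool" where
  "appears_before xs p p' \<longleftrightarrow> (\<exists>a b. a < b \<and> b < length xs \<and> xs ! a = p \<and> xs ! b = p')"

end

theory Submission
  imports Defs
begin

text \<open>
  A commit signature of an operation \<open>o\<close> binds the hash of the whole operation sequence up to
  the sequence number of \<open>o\<close>, and every hash that ever appears in a client's hash chain covers only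
  operations whose invocation had already been signed. So if \<open>o\<close> completes before \<open>o'\<close> is
  invoked, then \<open>o'\<close> is covered neither by the hash committed for \<open>o\<close> nor by any hash that
  precedes it in a client's chain. Each of the ways in which \<open>o'\<close> could appear before \<open>o\<close> in
  \<open>\<pi>\<^sub>i = \<alpha>\<^sub>i \<circ> \<beta>\<^sub>i\<close> would put \<open>o'\<close> into such a prefix, because confirmed
  operations are ordered by sequence number and the last confirmed commit of \<open>C\<^sub>i\<close> precedes all of
  \<open>\<beta>\<^sub>i\<close> in the hash chain of \<open>C\<^sub>i\<close>.
\<close>

lemma set_map_filter: "y \<in> set (List.map_filter f xs) \<longleftrightarrow> (\<exists>x \<in> set xs. f x = Some y)"
  by (induction xs) (auto split: option.splits)

lemma map_filter_append: "List.map_filter f (xs @ ys) = List.map_filter f xs @ List.map_filter f ys"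
  by (induction xs) (auto split: option.splits)

lemma map_filter_map: "List.map_filter f (map g xs) = List.map_filter (f \<circ> g) xs"
  by (induction xs) (auto split: option.splits)

lemma distinct_map_filter_nth_eq:
  assumes "distinct (List.map_filter f xs)" "a < length xs" "b < length xs"
    "f (xs ! a) = Some v" "f (xs ! b) = Some v"
  shows "a = b"
  using assms
proof (induction xs arbitrary: a b)
  case (Cons x xs)
  have "v \<notin> set (List.map_filter f xs)" if "f x = Some v"
    using Cons.prems(1) that by simp
  moreover have "v \<in> set (List.map_filter f xs)" if "n < length xs" "f (xs ! n) = Some v" for n
    using that nth_mem unfolding set_map_filter by blast
  moreover have "distinct (List.map_filter f xs)" using Cons.prems(1) by (auto split: option.splits)
  ultimately show ?case using Cons.IH[of "a - 1" "b - 1"] Cons.prems(2-5)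
    by (cases a; cases b) auto
qed simp

lemma appears_before_append_left:
  assumes "appears_before xs p p'"
  shows "appears_before (xs @ ys) p p'"
proof -
  obtain a b where "a < b" "b < length xs" "xs ! a = p" "xs ! b = p'"
    using assms unfolding appears_before_def by blast
  then show ?thesis unfolding appears_before_def
    by (intro exI[of _ a] exI[of _ b]) (simp add: nth_append)
qed

lemma appears_before_append_right:
  assumes "appears_before ys p p'"
  shows "appears_before (xs @ ys) p p'"
proof -
  obtain a b where "a < b" "b < length ys" "ys ! a = p" "ys ! b = p'"
    using assms unfolding appears_before_def by blast
  then show ?thesis unfolding appears_before_def
    by (intro exI[of _ "length xs + a"] exI[of _ "length xs + b"]) simp
qed

lemma appears_before_append_across:
  assumes "p \<in> set xs" "p' \<in> set ys"
  shows "appears_before (xs @ ys) p p'"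
proof -
  obtain a b where "a < length xs" "xs ! a = p" "b < length ys" "ys ! b = p'"
    using assms by (auto simp: in_set_conv_nth)
  then show ?thesis unfolding appears_before_def
    by (intro exI[of _ a] exI[of _ "length xs + b"]) (simp add: nth_append)
qed

lemma appears_before_sort_key:
  assumes "(p, a) \<in> set xs" "(p', b) \<in> set xs" "a < b"
  shows "appears_before (map fst (sort_key snd xs)) p p'"
proof -
  let ?ys = "sort_key snd xs"
  obtain x y where x: "x < length ?ys" "?ys ! x = (p, a)" and y: "y < length ?ys" "?ys ! y = (p', b)"
    using assms(1,2) by (metis in_set_conv_nth set_sort)
  have "x < y"
  proof (rule ccontr)
    assume "\<not> x < y"
    then have "snd (?ys ! y) \<le> snd (?ys ! x)"
      using sorted_nth_mono[of "map snd ?ys" y x] x by simp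
    then show False using x y assms(3) by simp
  qed
  then show ?thesis using x y unfolding appears_before_def by (intro exI[of _ x] exI[of _ y]) auto
qed

lemma takeWhile_neq_snoc:
  "x \<in> set xs \<Longrightarrow> length (takeWhile (\<lambda>y. y \<noteq> x) xs) < length xs \<and>
    xs ! length (takeWhile (\<lambda>y. y \<noteq> x) xs) = x \<and>
    takeWhile (\<lambda>y. y \<noteq> x) xs @ [x] = take (Suc (length (takeWhile (\<lambda>y. y \<noteq> x) xs))) xs"
  by (induction xs) auto

section \<open>Client steps\<close>

lemma cstep_cases:
  assumes step: "cstep F sg e st = (st', a, ms)"
  obtains (halted) "chalt st" "chalt st'" "ms = []" "cH st' = cH st" "cc st' = cc st"
      "a = ANone \<or> (\<exists>i p. e = Invoke i p \<and> a = AInv p)"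
  | (halting) "\<not> chalt st" "st' = st\<lparr>chalt := True\<rparr>" "a = ANone" "ms = []"
  | (invoke) i p where "\<not> chalt st" "e = Invoke i p" "st' = st\<lparr>cu := Some p\<rparr>" "a = AInv p"
      "ms = [SInvoke p i]"
  | (commit) i \<omega> H' \<gamma> \<mu> r z where "\<not> chalt st" "e = Reply i \<omega>"
      "rloop sg i (Suc (cc st)) (cH st) (cZ st) \<omega> = Some (H', \<gamma>, \<mu>)" "\<omega> \<noteq> []"
      "cu st = Some (fst (last \<omega>))" "fst (snd (last \<omega>)) = i"
      "cH st' = H'" "cc st' = cc st" "cu st' = None" "\<not> chalt st'"
      "a = ACommit (fst (last \<omega>)) r (cc st + length \<omega>) (the (H' (cc st + length \<omega>))) z"
      "ms = [SCommit (fst (last \<omega>)) (cc st + length \<omega>) (the (H' (cc st + length \<omega>))) z]"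
  | (confirm) i p q h z \<phi> j where "\<not> chalt st" "e = Broadcast i p q h z \<phi> j" "q = Suc (cc st)"
      "verify sg j \<phi> (SCommit p q h z)"
      "cH st' = (if cH st q = None then (cH st)(q \<mapsto> Hash (the (cH st (q - 1))) p q j) else cH st)"
      "cH st' q = Some h" "cc st' = q" "cu st' = cu st" "\<not> chalt st'" "a = AConfirm p q j" "ms = []"
proof (cases "chalt st")
  case True
  then show ?thesis using step by (intro halted) (cases e; auto simp: cstep_def)+
next
  case running: False
  show ?thesis
  proof (cases e)
    case (Invoke i p)
    then show ?thesis using step running by (intro invoke) (auto simp: cstep_def)
  next
    case (Reply i \<omega>)
    show ?thesis
    proof (cases "rloop sg i (Suc (cc st)) (cH st) (cZ st) \<omega>")
      case None
      then show ?thesis using step running Reply by (intro halting) (auto simp: cstep_def)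
    next
      case (Some res)
      then obtain H' \<gamma> \<mu> where loop: "rloop sg i (Suc (cc st)) (cH st) (cZ st) \<omega> = Some (H', \<gamma>, \<mu>)"
        by (cases res) auto
      show ?thesis
      proof (cases "\<omega> = [] \<or> Some (fst (last \<omega>)) \<noteq> cu st \<or> fst (snd (last \<omega>)) \<noteq> i")
        case True
        then show ?thesis using step running Reply loop by (intro halting) (auto simp: cstep_def)
      next
        case accepted: False
        then have pending: "cu st = Some (fst (last \<omega>))" by auto
        define a0 where "a0 = F_seq F (cs st) \<mu>"
        show ?thesis
        proof (cases "commute F a0 [the (cu st)] \<gamma>")
          case True
          then show ?thesis using step running Reply loop accepted
            by (intro commit[of i \<omega> H' \<gamma> \<mu> "Some (snd (F a0 (the (cu st))))" Success])
              (auto simp: cstep_def Let_def a0_def pending)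
        next
          case False
          then show ?thesis using step running Reply loop accepted
            by (intro commit[of i \<omega> H' \<gamma> \<mu> None Abort]) (auto simp: cstep_def Let_def a0_def pending)
        qed
      qed
    qed
  next
    case (Broadcast i p q h z \<phi> j)
    show ?thesis
    proof (cases "q = Suc (cc st) \<and> verify sg j \<phi> (SCommit p q h z)")
      case False
      then have "cstep F sg e st = (st\<lparr>chalt := True\<rparr>, ANone, [])"
        using running unfolding cstep_def Broadcast by (simp add: Let_def)
      then show ?thesis using step running by (intro halting) auto
    next
      case valid: True
      define H' where "H' = (if cH st q = None then (cH st)(q \<mapsto> Hash (the (cH st (q - 1))) p q j) else cH st)"
      have unfolded: "cstep F sg e st = (if H' q \<noteq> Some h then (st\<lparr>chalt := True\<rparr>, ANone, [])
             else (st\<lparr>cH := H', cs := (if z = Success then fst (F (cs st) p) else cs st),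
                      cc := Suc (cc st)\<rparr>, AConfirm p q j, []))"
        unfolding cstep_def Broadcast H'_def Let_def ev.case if_P[OF valid] if_not_P[OF running] by (rule refl)
      show ?thesis
      proof (cases "H' q = Some h")
        case False
        then show ?thesis using step unfolded running by (intro halting) auto
      next
        case True
        then show ?thesis using step unfolded running valid Broadcast
          by (intro confirm[of i p q h z \<phi> j]) (auto simp: H'_def)
      qed
    qed
  qed
qed

section \<open>Hash chains\<close>

fun hash_ops :: "'op hv \<Rightarrow> ('op \<times> nat) set" where
  "hash_ops HNull = {}"
| "hash_ops (Hash x p l j) = insert (p, j) (hash_ops x)"

definition signed_invocations :: "(nat \<times> 'op smsg) set \<Rightarrow> ('op \<times> nat) set" where
  "signed_invocations sg = {(p, j). (j, SInvoke p j) \<in> sg}"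

definition chain_wf :: "(nat \<times> 'op smsg) set \<Rightarrow> (nat \<Rightarrow> 'op hv option) \<Rightarrow> bool" where
  "chain_wf sg H \<longleftrightarrow> H 0 = Some HNull \<and>
     (\<forall>q h. H q = Some h \<longrightarrow> q > 0 \<longrightarrow> (\<exists>x p j. h = Hash x p q j \<and> H (q - 1) = Some x)) \<and>
     (\<forall>q h. H q = Some h \<longrightarrow> hash_ops h \<subseteq> signed_invocations sg)"

lemma chain_wf_mono: "chain_wf sg H \<Longrightarrow> sg \<subseteq> sg' \<Longrightarrow> chain_wf sg' H"
  unfolding chain_wf_def signed_invocations_def by blast

lemma signed_invocations_insert_commit [simp]:
  "signed_invocations (insert (c, SCommit p l h z) sg) = signed_invocations sg"
  unfolding signed_invocations_def by auto

lemma chain_wf_extend: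
  assumes wf: "chain_wf sg H" and prev: "H (q - 1) = Some x" and q_pos: "q > 0"
    and signed: "(p, j) \<in> signed_invocations sg" and fresh: "H q = None"
  shows "chain_wf sg (H(q \<mapsto> Hash x p q j))"
proof -
  have prev_ops: "hash_ops x \<subseteq> signed_invocations sg" using wf prev unfolding chain_wf_def by blast
  have "\<exists>x' p' j'. h = Hash x' p' q' j' \<and> (H(q \<mapsto> Hash x p q j)) (q' - 1) = Some x'"
    if new: "(H(q \<mapsto> Hash x p q j)) q' = Some h" and pos: "q' > 0" for q' h
  proof (cases "q' = q")
    case False
    then have "H q' = Some h" using new by simp
    then obtain x' p' j' where "h = Hash x' p' q' j'" "H (q' - 1) = Some x'"
      using wf pos unfolding chain_wf_def by blast
    moreover have "q' - 1 \<noteq> q" using calculation(2) fresh by auto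
    ultimately show ?thesis by auto
  qed (use new prev q_pos in auto)
  then show ?thesis using wf prev_ops signed q_pos unfolding chain_wf_def by auto
qed

lemma chain_wf_prefix_ops:
  assumes wf: "chain_wf sg H" and "H q = Some h" "H q' = Some h'" "q' \<le> q"
  shows "hash_ops h' \<subseteq> hash_ops h"
  using assms(2-4)
proof (induction q arbitrary: h)
  case 0
  then have "h' = h" by (metis le_zero_eq option.inject)
  then show ?case by simp
next
  case (Suc q)
  show ?case
  proof (cases "q' = Suc q")
    case True
    then have "H (Suc q) = Some h'" using Suc.prems(2) by simp
    then have "h' = h" using Suc.prems(1) by simp
    then show ?thesis by simp
  next
    case False
    have "\<exists>x p j. h = Hash x p (Suc q) j \<and> H (Suc q - 1) = Some x"
      using wf Suc.prems(1) unfolding chain_wf_def by blast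
    then obtain x p j where "h = Hash x p (Suc q) j" "H q = Some x" by auto
    then show ?thesis using Suc.IH[of x] Suc.prems False by auto
  qed
qed

lemma rloop_chain_wf:
  assumes "rloop sg i l H Z \<omega> = Some (H'', \<gamma>, \<mu>)" "chain_wf sg H" "l > 0" "H (l - 1) \<noteq> None"
  shows "chain_wf sg H'' \<and> H \<subseteq>\<^sub>m H'' \<and>
    (\<omega> \<noteq> [] \<longrightarrow> (\<exists>x. H'' (l + length \<omega> - 1) =
       Some (Hash x (fst (last \<omega>)) (l + length \<omega> - 1) (fst (snd (last \<omega>))))))"
  using assms
proof (induction \<omega> arbitrary: l H H'' \<gamma> \<mu>)
  case Nil
  then show ?case by auto
next
  case (Cons entry rest)
  obtain p j \<tau> where entry: "entry = (p, j, \<tau>)" by (cases entry) auto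
  obtain x where prev: "H (l - 1) = Some x" using Cons.prems by auto
  define H' where "H' = (if H l = None then H(l \<mapsto> Hash x p l j) else H)"
  have signed: "verify sg j \<tau> (SInvoke p j)"
    and agree: "H l = None \<or> H l = Some (Hash x p l j)"
    using Cons.prems(1) prev unfolding entry by (auto simp: Let_def split: if_splits)
  obtain \<gamma>' \<mu>' where loop: "rloop sg i (Suc l) H' Z rest = Some (H'', \<gamma>', \<mu>')"
    using Cons.prems(1) signed agree prev unfolding entry H'_def
    by (auto simp: Let_def split: option.splits)
  have H'l: "H' l = Some (Hash x p l j)" using agree unfolding H'_def by auto
  have le: "H \<subseteq>\<^sub>m H'" unfolding H'_def by (auto simp: map_le_def)
  have "(p, j) \<in> signed_invocations sg"
    using signed unfolding verify_def signed_invocations_def by auto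
  then have "chain_wf sg H'"
    using chain_wf_extend[OF Cons.prems(2) prev Cons.prems(3)] Cons.prems(2) agree
    unfolding H'_def by auto
  then have IH: "chain_wf sg H'' \<and> H' \<subseteq>\<^sub>m H'' \<and> (rest \<noteq> [] \<longrightarrow> (\<exists>x. H'' (Suc l + length rest - 1) =
      Some (Hash x (fst (last rest)) (Suc l + length rest - 1) (fst (snd (last rest))))))"
    using Cons.IH[OF loop] H'l by auto
  moreover have "H \<subseteq>\<^sub>m H''" using le IH map_le_trans by blast
  moreover have "\<exists>x. H'' (l + length (entry # rest) - 1) = Some (Hash x (fst (last (entry # rest)))
      (l + length (entry # rest) - 1) (fst (snd (last (entry # rest)))))"
  proof (cases "rest = []")
    case True
    have "H'' l = Some (Hash x p l j)" using IH H'l by (auto simp: map_le_def dom_def)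
    then show ?thesis using True entry by auto
  next
    case False
    then obtain y where "H'' (Suc l + length rest - 1) =
        Some (Hash y (fst (last rest)) (Suc l + length rest - 1) (fst (snd (last rest))))"
      using IH by blast
    then show ?thesis using False by (intro exI[of _ y]) simp
  qed
  ultimately show ?case by (intro conjI impI) blast+
qed

section \<open>An invariant of executions\<close>

definition exec_inv :: "'op ev list \<Rightarrow> nat \<Rightarrow> (nat \<Rightarrow> ('op, 's) cst) \<Rightarrow> (nat \<times> 'op smsg) set \<Rightarrow> bool" where
  "exec_inv E t st sg \<longleftrightarrow>
    (\<forall>c. chain_wf sg (cH (st c)) \<and> cH (st c) (cc (st c)) \<noteq> None) \<and>
    (\<forall>j p l h z. (j, SCommit p l h z) \<in> sg \<longrightarrow> (p, j) \<in> hash_ops h \<and> hash_ops h \<subseteq> signed_invocations sg) \<and>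
    (\<forall>c p. \<not> chalt (st c) \<and> cu (st c) = Some p \<longrightarrow> (c, SInvoke p c) \<in> sg) \<and>
    (\<forall>c p l h z. (c, SCommit p l h z) \<in> sg \<and> cu (st c) = Some p \<longrightarrow> chalt (st c)) \<and>
    (\<forall>c p l h z l' h' z'. (c, SCommit p l h z) \<in> sg \<and> (c, SCommit p l' h' z') \<in> sg \<longrightarrow> l = l' \<and> h = h') \<and>
    (\<forall>j p. (j, SInvoke p j) \<in> sg \<longrightarrow> (\<exists>t0 < t. E ! t0 = Invoke j p))"

lemma exec_invI:
  assumes "\<And>c. chain_wf sg (cH (st c))" "\<And>c. cH (st c) (cc (st c)) \<noteq> None"
    "\<And>j p l h z. (j, SCommit p l h z) \<in> sg \<Longrightarrow>
       (p, j) \<in> hash_ops h \<and> hash_ops h \<subseteq> signed_invocations sg"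
    "\<And>c p. \<not> chalt (st c) \<Longrightarrow> cu (st c) = Some p \<Longrightarrow> (c, SInvoke p c) \<in> sg"
    "\<And>c p l h z. (c, SCommit p l h z) \<in> sg \<Longrightarrow> cu (st c) = Some p \<Longrightarrow> chalt (st c)"
    "\<And>c p l h z l' h' z'. (c, SCommit p l h z) \<in> sg \<Longrightarrow> (c, SCommit p l' h' z') \<in> sg \<Longrightarrow>
       l = l' \<and> h = h'"
    "\<And>j p. (j, SInvoke p j) \<in> sg \<Longrightarrow> \<exists>t0 < t. E ! t0 = Invoke j p"
  shows "exec_inv E t st sg"
  unfolding exec_inv_def using assms by meson

lemma exec_inv_chain_wf: "exec_inv E t st sg \<Longrightarrow> chain_wf sg (cH (st c))"
  unfolding exec_inv_def by (elim conjE) blast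

lemma exec_inv_chain_defined: "exec_inv E t st sg \<Longrightarrow> cH (st c) (cc (st c)) \<noteq> None"
  unfolding exec_inv_def by (elim conjE) blast

lemma exec_inv_commit_sig:
  "exec_inv E t st sg \<Longrightarrow> (j, SCommit p l h z) \<in> sg \<Longrightarrow>
    (p, j) \<in> hash_ops h \<and> hash_ops h \<subseteq> signed_invocations sg"
  unfolding exec_inv_def by (elim conjE) blast

lemma exec_inv_pending_signed:
  "exec_inv E t st sg \<Longrightarrow> \<not> chalt (st c) \<Longrightarrow> cu (st c) = Some p \<Longrightarrow> (c, SInvoke p c) \<in> sg"
  unfolding exec_inv_def by (elim conjE) blast

lemma exec_inv_committed_not_pending:
  "exec_inv E t st sg \<Longrightarrow> (c, SCommit p l h z) \<in> sg \<Longrightarrow> cu (st c) = Some p \<Longrightarrow> chalt (st c)"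
  unfolding exec_inv_def by (elim conjE) blast

lemma exec_inv_commit_sig_unique:
  "exec_inv E t st sg \<Longrightarrow> (c, SCommit p l h z) \<in> sg \<Longrightarrow> (c, SCommit p l' h' z') \<in> sg \<Longrightarrow> l = l' \<and> h = h'"
  unfolding exec_inv_def by (elim conjE) metis

lemma exec_inv_invocation_signed_before:
  "exec_inv E t st sg \<Longrightarrow> (j, SInvoke p j) \<in> sg \<Longrightarrow> \<exists>t0 < t. E ! t0 = Invoke j p"
  unfolding exec_inv_def by (elim conjE) metis

lemma exec_inv_init: "exec_inv E 0 (\<lambda>_. init_cst s0) {}"
  by (rule exec_invI) (simp_all add: chain_wf_def init_cst_def)

lemma exec_inv_halted:
  assumes inv: "exec_inv E t st sg" and halted: "chalt s1" and "cH s1 = cH (st c)" "cc s1 = cc (st c)"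
  shows "exec_inv E (Suc t) (st(c := s1)) sg"
proof (rule exec_invI)
  fix c' show "chain_wf sg (cH ((st(c := s1)) c'))" "cH ((st(c := s1)) c') (cc ((st(c := s1)) c')) \<noteq> None"
    using assms exec_inv_chain_wf exec_inv_chain_defined by (cases "c' = c"; fastforce)+
next
  fix c' p l h z assume "(c', SCommit p l h z) \<in> sg" "cu ((st(c := s1)) c') = Some p"
  then show "chalt ((st(c := s1)) c')"
    using exec_inv_committed_not_pending[OF inv] halted by (cases "c' = c") auto
next
  fix j p assume "(j, SInvoke p j) \<in> sg"
  then show "\<exists>t0 < Suc t. E ! t0 = Invoke j p"
    using exec_inv_invocation_signed_before[OF inv] less_SucI by blast
qed (use halted exec_inv_commit_sig[OF inv] exec_inv_pending_signed[OF inv] exec_inv_commit_sig_unique[OF inv]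
  in \<open>auto split: if_splits\<close>)

lemma exec_inv_invoke:
  assumes inv: "exec_inv E t st sg" and event: "E ! t = Invoke c p"
    and fresh: "\<forall>t0 < t. E ! t0 \<noteq> Invoke c p"
  shows "exec_inv E (Suc t) (st(c := (st c)\<lparr>cu := Some p\<rparr>)) (insert (c, SInvoke p c) sg)"
    (is "exec_inv E (Suc t) ?st ?sg")
proof (rule exec_invI)
  have not_committed: "(c, SCommit p l h z) \<notin> sg" for l h z
  proof
    assume "(c, SCommit p l h z) \<in> sg"
    then have "(c, SInvoke p c) \<in> sg"
      using exec_inv_commit_sig[OF inv] unfolding signed_invocations_def by blast
    then show False using exec_inv_invocation_signed_before[OF inv] fresh by blast
  qed
  fix c'
  show "chain_wf ?sg (cH (?st c'))"
    using exec_inv_chain_wf[OF inv] by (cases "c' = c") (auto intro: chain_wf_mono)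
  show "cH (?st c') (cc (?st c')) \<noteq> None" using exec_inv_chain_defined[OF inv] by simp
  show "chalt (?st c')" if "(c', SCommit p' l h z) \<in> ?sg" "cu (?st c') = Some p'" for p' l h z
    using that not_committed exec_inv_committed_not_pending[OF inv] by (cases "c' = c") auto
  show "(c', SInvoke p' c') \<in> ?sg" if "\<not> chalt (?st c')" "cu (?st c') = Some p'" for p'
    using that exec_inv_pending_signed[OF inv] by (cases "c' = c") auto
next
  fix j p' l h z assume "(j, SCommit p' l h z) \<in> insert (c, SInvoke p c) sg"
  then show "(p', j) \<in> hash_ops h \<and> hash_ops h \<subseteq> signed_invocations (insert (c, SInvoke p c) sg)"
    using exec_inv_commit_sig[OF inv] unfolding signed_invocations_def by blast
next
  fix c' p' l h z l' h' z'
  assume "(c', SCommit p' l h z) \<in> insert (c, SInvoke p c) sg" "(c', SCommit p' l' h' z') \<in> insert (c, SInvoke p c) sg"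
  then show "l = l' \<and> h = h'" using exec_inv_commit_sig_unique[OF inv] by blast
next
  fix j p' assume "(j, SInvoke p' j) \<in> insert (c, SInvoke p c) sg"
  then show "\<exists>t0 < Suc t. E ! t0 = Invoke j p'"
    using exec_inv_invocation_signed_before[OF inv] event less_SucI by blast
qed

lemma exec_inv_commit:
  assumes inv: "exec_inv E t st sg" and running: "\<not> chalt (st c)" and pending: "cu (st c) = Some u"
    and wf: "chain_wf sg H'" and grows: "cH (st c) \<subseteq>\<^sub>m H'"
    and hash: "H' l = Some h" "(u, c) \<in> hash_ops h"
    and s1: "cH s1 = H'" "cc s1 = cc (st c)" "cu s1 = None"
  shows "exec_inv E (Suc t) (st(c := s1)) (insert (c, SCommit u l h z) sg)"
    (is "exec_inv E (Suc t) ?st ?sg")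
proof (rule exec_invI)
  fix c'
  show "chain_wf ?sg (cH (?st c'))"
    using exec_inv_chain_wf[OF inv] wf s1 by (cases "c' = c") (auto intro: chain_wf_mono)
  show "cH (?st c') (cc (?st c')) \<noteq> None"
  proof (cases "c' = c")
    case True
    then show ?thesis using exec_inv_chain_defined[OF inv, of c] grows s1 by (auto simp: map_le_def dom_def)
  qed (use exec_inv_chain_defined[OF inv] in simp)
  show "chalt (?st c')" if "(c', SCommit p' l' h' z') \<in> ?sg" "cu (?st c') = Some p'" for p' l' h' z'
    using that exec_inv_committed_not_pending[OF inv] s1 by (cases "c' = c") auto
  show "(c', SInvoke p' c') \<in> ?sg" if "\<not> chalt (?st c')" "cu (?st c') = Some p'" for p'
    using that exec_inv_pending_signed[OF inv] s1 by (cases "c' = c") auto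
next
  have "hash_ops h \<subseteq> signed_invocations sg" using wf hash(1) unfolding chain_wf_def by blast
  then show "(p, j) \<in> hash_ops h' \<and> hash_ops h' \<subseteq> signed_invocations ?sg"
    if "(j, SCommit p l' h' z') \<in> ?sg" for j p l' h' z'
    using that hash(2) by (auto dest: exec_inv_commit_sig[OF inv])
next
  fix c' p l1 h1 z1 l2 h2 z2 assume "(c', SCommit p l1 h1 z1) \<in> ?sg" "(c', SCommit p l2 h2 z2) \<in> ?sg"
  moreover have "(c, SCommit u l' h' z') \<notin> sg" for l' h' z'
    using exec_inv_committed_not_pending[OF inv] pending running by blast
  ultimately show "l1 = l2 \<and> h1 = h2" using exec_inv_commit_sig_unique[OF inv] by blast
next
  fix j p assume "(j, SInvoke p j) \<in> ?sg"
  then show "\<exists>t0 < Suc t. E ! t0 = Invoke j p"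
    using exec_inv_invocation_signed_before[OF inv] less_SucI by blast
qed

lemma exec_inv_confirm:
  assumes inv: "exec_inv E t st sg" and running: "\<not> chalt (st c)" and q: "q = Suc (cc (st c))"
    and signed: "(j, SCommit p q h z) \<in> sg"
    and s1: "cH s1 = (if cH (st c) q = None then (cH (st c))(q \<mapsto> Hash (the (cH (st c) (q - 1))) p q j)
               else cH (st c))"
      "cH s1 q = Some h" "cc s1 = q" "cu s1 = cu (st c)" "\<not> chalt s1"
  shows "exec_inv E (Suc t) (st(c := s1)) sg"
proof (rule exec_invI)
  have "(p, j) \<in> signed_invocations sg" using exec_inv_commit_sig[OF inv signed] by blast
  moreover obtain x where "cH (st c) (q - 1) = Some x" using exec_inv_chain_defined[OF inv, of c] q by auto
  ultimately have "chain_wf sg (cH s1)"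
    using chain_wf_extend[OF exec_inv_chain_wf[OF inv, of c]] exec_inv_chain_wf[OF inv, of c] s1(1) q
    by (cases "cH (st c) q = None") auto
  then show "chain_wf sg (cH ((st(c := s1)) c'))" for c'
    using exec_inv_chain_wf[OF inv] by (cases "c' = c") auto
  show "cH ((st(c := s1)) c') (cc ((st(c := s1)) c')) \<noteq> None" for c'
    using exec_inv_chain_defined[OF inv] s1 by (cases "c' = c") auto
  show "chalt ((st(c := s1)) c')" if "(c', SCommit p' l h' z') \<in> sg" "cu ((st(c := s1)) c') = Some p'"
    for c' p' l h' z'
    using that exec_inv_committed_not_pending[OF inv] running s1 by (cases "c' = c") auto
  show "(c', SInvoke p' c') \<in> sg" if "\<not> chalt ((st(c := s1)) c')" "cu ((st(c := s1)) c') = Some p'" for c' p'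
    using that exec_inv_pending_signed[OF inv] running s1 by (cases "c' = c") auto
next
  fix j p assume "(j, SInvoke p j) \<in> sg"
  then show "\<exists>t0 < Suc t. E ! t0 = Invoke j p"
    using exec_inv_invocation_signed_before[OF inv] less_SucI by blast
qed (use exec_inv_commit_sig[OF inv] exec_inv_commit_sig_unique[OF inv] in blast)+

lemma exec_inv_step:
  assumes inv: "exec_inv E t st sg" and event: "E ! t = e"
    and fresh: "\<And>i p t0. e = Invoke i p \<Longrightarrow> t0 < t \<Longrightarrow> E ! t0 \<noteq> Invoke i p"
    and step: "cstep F sg e (st (ev_client e)) = (s1, a, ms)"
  shows "exec_inv E (Suc t) (st(ev_client e := s1)) (sg \<union> (\<lambda>m. (ev_client e, m)) ` set ms)"
  using step
proof (cases rule: cstep_cases)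
  case halted
  then show ?thesis using exec_inv_halted[OF inv] by simp
next
  case halting
  then show ?thesis using exec_inv_halted[OF inv] by simp
next
  case (invoke i p)
  then show ?thesis using exec_inv_invoke[OF inv, of i p] event fresh by simp
next
  case (commit i \<omega> H' \<gamma> \<mu> r z)
  have client: "ev_client e = i" using commit(2) by simp
  note commit = commit[unfolded client]
  let ?u = "fst (last \<omega>)" and ?l = "cc (st i) + length \<omega>"
  have "chain_wf sg H' \<and> cH (st i) \<subseteq>\<^sub>m H' \<and> (\<exists>x. H' ?l = Some (Hash x ?u ?l i))"
    using rloop_chain_wf[OF commit(3) exec_inv_chain_wf[OF inv]] exec_inv_chain_defined[OF inv, of i]
      commit(4,6) by simp
  then obtain x where wf: "chain_wf sg H'" and grows: "cH (st i) \<subseteq>\<^sub>m H'"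
    and hash: "H' ?l = Some (Hash x ?u ?l i)" by blast
  have "exec_inv E (Suc t) (st(i := s1)) (insert (i, SCommit ?u ?l (Hash x ?u ?l i) z) sg)"
    by (rule exec_inv_commit[OF inv commit(1,5) wf grows hash]) (use commit(7-9) in simp_all)
  moreover have "sg \<union> (\<lambda>m. (ev_client e, m)) ` set ms = insert (i, SCommit ?u ?l (Hash x ?u ?l i) z) sg"
    using commit(12) client hash by simp
  ultimately show ?thesis using client by (simp only:)
next
  case (confirm i p q h z \<phi> j)
  have client: "ev_client e = i" using confirm(2) by simp
  note confirm = confirm[unfolded client]
  have "(j, SCommit p q h z) \<in> sg" using confirm(4) unfolding verify_def by blast
  then have "exec_inv E (Suc t) (st(i := s1)) sg"
    by (rule exec_inv_confirm[OF inv confirm(1,3) _ confirm(5-9)])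
  then show ?thesis using confirm(11) client by simp
qed

lemma cstep_chain_grows:
  assumes inv: "exec_inv E t st sg" and step: "cstep F sg e (st c) = (s1, a, ms)"
  shows "cH (st c) \<subseteq>\<^sub>m cH s1 \<and> cc (st c) \<le> cc s1"
  using step
proof (cases rule: cstep_cases)
  case (commit i \<omega> H' \<gamma> \<mu> r z)
  have "cH (st c) \<subseteq>\<^sub>m H'"
    using rloop_chain_wf[OF commit(3) exec_inv_chain_wf[OF inv]] exec_inv_chain_defined[OF inv, of c]
    by simp
  then show ?thesis using commit(7,8) by simp
next
  case (confirm i p q h z \<phi> j)
  then show ?thesis by (auto simp: map_le_def)
qed simp_all

lemma cstep_invoke_event: "cstep F sg e st = (st', AInv p, ms) \<Longrightarrow> \<exists>i. e = Invoke i p"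
  by (cases rule: cstep_cases) auto

lemma cstep_commit:
  assumes inv: "exec_inv E t st sg" and step: "cstep F sg e (st (ev_client e)) = (s1, ACommit p r l h z, ms)"
  shows "SCommit p l h z \<in> set ms \<and> cH s1 l = Some h"
  using step
proof (cases rule: cstep_cases)
  case (commit i \<omega> H' \<gamma> \<mu> r' z')
  have client: "ev_client e = i" using commit(2) by simp
  obtain x where "H' (cc (st i) + length \<omega>) = Some x"
    using rloop_chain_wf[OF commit(3)[unfolded client] exec_inv_chain_wf[OF inv]]
      exec_inv_chain_defined[OF inv, of i] commit(4) by auto
  then show ?thesis using commit(7,11,12) client by simp
next
  case confirm
  show ?thesis using confirm(10) by simp
qed simp_all

lemma cstep_confirm:
  assumes "cstep F sg e st = (s1, AConfirm p q j, ms)"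
  shows "\<exists>h z \<phi>. verify sg j \<phi> (SCommit p q h z) \<and> cH s1 q = Some h \<and> q = Suc (cc st) \<and> cc s1 = q"
  using assms by (cases rule: cstep_cases) auto

definition step_config :: "('s \<Rightarrow> 'op \<Rightarrow> 's \<times> 'r) \<Rightarrow> (nat \<Rightarrow> ('op, 's) cst) \<times> (nat \<times> 'op smsg) set
    \<Rightarrow> 'op ev \<Rightarrow> (nat \<Rightarrow> ('op, 's) cst) \<times> (nat \<times> 'op smsg) set" where
  "step_config F cfg e =
    (let (st, sg) = cfg; (s1, a, ms) = cstep F sg e (st (ev_client e))
     in (st(ev_client e := s1), sg \<union> (\<lambda>m. (ev_client e, m)) ` set ms))"

definition config :: "('s \<Rightarrow> 'op \<Rightarrow> 's \<times> 'r) \<Rightarrow> 's \<Rightarrow> 'op ev list \<Rightarrow> nat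
    \<Rightarrow> (nat \<Rightarrow> ('op, 's) cst) \<times> (nat \<times> 'op smsg) set" where
  "config F s0 E t = foldl (step_config F) (\<lambda>_. init_cst s0, {}) (take t E)"

lemma length_runs [simp]: "length (runs F st sg es) = length es"
  by (induction es arbitrary: st sg) (auto simp: Let_def split: prod.splits)

lemma nth_runs:
  "t < length es \<Longrightarrow> runs F st sg es ! t =
    (let (st', sg') = foldl (step_config F) (st, sg) (take t es)
     in (es ! t, st' (ev_client (es ! t)), fst (snd (cstep F sg' (es ! t) (st' (ev_client (es ! t)))))))"
proof (induction es arbitrary: st sg t)
  case (Cons e es)
  obtain s1 a ms where step: "cstep F sg e (st (ev_client e)) = (s1, a, ms)"
    by (cases "cstep F sg e (st (ev_client e))") auto
  show ?case
  proof (cases t)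
    case (Suc t')
    then show ?thesis using Cons step by (simp add: step_config_def Let_def)
  qed (use step in \<open>simp add: Let_def\<close>)
qed simp

lemma trace_eq_config:
  "trace F s0 E = map (\<lambda>t. let (st, sg) = config F s0 E t
     in (E ! t, st (ev_client (E ! t)), fst (snd (cstep F sg (E ! t) (st (ev_client (E ! t))))))) [0..<length E]"
  by (rule nth_equalityI) (simp_all add: trace_def nth_runs config_def)

locale cop_execution =
  fixes F :: "'s \<Rightarrow> 'op \<Rightarrow> 's \<times> 'r" and s0 :: 's and E :: "'op ev list"
  assumes distinct_invocations: "distinct (List.map_filter inv_op E)"
begin

abbreviation "cst_at t \<equiv> fst (config F s0 E t)"

abbreviation "sigs_at t \<equiv> snd (config F s0 E t)"

abbreviation "step_at t \<equiv> cstep F (sigs_at t) (E ! t) (cst_at t (ev_client (E ! t)))"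

abbreviation "act_at t \<equiv> fst (snd (step_at t))"

abbreviation "exec_trace \<equiv> trace F s0 E"

abbreviation "final_sigs \<equiv> sigs_at (length E)"

abbreviation "final_chain c \<equiv> cH (cst_at (length E) c)"

lemma invocation_unique: "a < length E \<Longrightarrow> b < length E \<Longrightarrow> E ! a = Invoke i p \<Longrightarrow> E ! b = Invoke j p \<Longrightarrow> a = b"
  using distinct_map_filter_nth_eq[OF distinct_invocations, of a b p] by simp

lemma config_Suc:
  assumes "t < length E"
  shows "cst_at (Suc t) = (cst_at t)(ev_client (E ! t) := fst (step_at t))"
    "sigs_at (Suc t) = sigs_at t \<union> (\<lambda>m. (ev_client (E ! t), m)) ` set (snd (snd (step_at t)))"
  using assms by (simp_all add: config_def take_Suc_conv_app_nth step_config_def split_beta)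

lemma exec_inv_at: "t \<le> length E \<Longrightarrow> exec_inv E t (cst_at t) (sigs_at t)"
proof (induction t)
  case 0
  show ?case using exec_inv_init by (simp add: config_def)
next
  case (Suc t)
  then have t: "t < length E" by simp
  have fresh: "E ! t0 \<noteq> Invoke i p" if "E ! t = Invoke i p" "t0 < t" for i p t0
    using invocation_unique[of t0 t i p i] that t by auto
  obtain s1 a ms where step: "step_at t = (s1, a, ms)" by (metis prod.collapse)
  show ?case
    unfolding config_Suc[OF t] step fst_conv snd_conv
    by (rule exec_inv_step[OF Suc.IH[OF less_imp_le[OF t]] refl fresh step])
qed

lemma chain_persists:
  assumes "t \<le> t'" "t' \<le> length E" "cH (cst_at t c) q = Some h"
  shows "cH (cst_at t' c) q = Some h"
  using assms
proof (induction t' rule: dec_induct)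
  case (step t')
  obtain s1 a ms where step_t': "step_at t' = (s1, a, ms)" by (metis prod.collapse)
  have "cH (cst_at t' (ev_client (E ! t'))) \<subseteq>\<^sub>m cH s1"
    using cstep_chain_grows[OF exec_inv_at step_t'] step by simp
  then show ?case using step config_Suc[of t'] step_t' by (auto simp: map_le_def dom_def)
qed

lemma sigs_at_mono: "t \<le> t' \<Longrightarrow> t' \<le> length E \<Longrightarrow> sigs_at t \<subseteq> sigs_at t'"
  by (induction t' rule: dec_induct) (auto simp: config_Suc)

lemma cc_at_Suc_mono: "t < length E \<Longrightarrow> cc (cst_at t c) \<le> cc (cst_at (Suc t) c)"
proof -
  assume t: "t < length E"
  obtain s1 a ms where step: "step_at t = (s1, a, ms)" by (metis prod.collapse)
  show ?thesis
    using cstep_chain_grows[OF exec_inv_at step] t config_Suc[OF t] step by auto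
qed

lemma act_at_invoke: "act_at t = AInv p \<Longrightarrow> \<exists>i. E ! t = Invoke i p"
  by (metis cstep_invoke_event prod.collapse)

lemma act_at_commit:
  assumes "t < length E" "act_at t = ACommit p r l h z"
  shows "(ev_client (E ! t), SCommit p l h z) \<in> sigs_at (Suc t) \<and> cH (cst_at (Suc t) (ev_client (E ! t))) l = Some h"
proof -
  obtain s1 ms where step: "step_at t = (s1, ACommit p r l h z, ms)" using assms(2) by (metis prod.collapse)
  show ?thesis using cstep_commit[OF exec_inv_at step] config_Suc[OF assms(1)] step assms(1) by auto
qed

lemma act_at_confirm:
  assumes "t < length E" "act_at t = AConfirm p q j"
  shows "\<exists>h z. (j, SCommit p q h z) \<in> sigs_at t \<and> cH (cst_at (Suc t) (ev_client (E ! t))) q = Some h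
    \<and> q = Suc (cc (cst_at t (ev_client (E ! t)))) \<and> cc (cst_at (Suc t) (ev_client (E ! t))) = q"
proof -
  obtain s1 ms where step: "step_at t = (s1, AConfirm p q j, ms)" using assms(2) by (metis prod.collapse)
  show ?thesis using cstep_confirm[OF step] config_Suc[OF assms(1)] step unfolding verify_def by auto
qed

lemma commit_in_final:
  assumes "t < length E" "act_at t = ACommit p r l h z"
  shows "(ev_client (E ! t), SCommit p l h z) \<in> final_sigs \<and> final_chain (ev_client (E ! t)) l = Some h"
  using act_at_commit[OF assms] sigs_at_mono[of "Suc t" "length E"] chain_persists[of "Suc t" "length E"] assms(1)
  by auto

lemma confirm_in_final:
  assumes "t < length E" "act_at t = AConfirm p q j"
  shows "\<exists>h z. (j, SCommit p q h z) \<in> final_sigs \<and> final_chain (ev_client (E ! t)) q = Some h"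
  using act_at_confirm[OF assms] sigs_at_mono[of t "length E"] chain_persists[of "Suc t" "length E"] assms(1)
  by fastforce

lemma final_chain_prefix_ops:
  "final_chain c L = Some h \<Longrightarrow> final_chain c L' = Some h' \<Longrightarrow> L' \<le> L \<Longrightarrow> hash_ops h' \<subseteq> hash_ops h"
  using chain_wf_prefix_ops[OF exec_inv_chain_wf[OF exec_inv_at]] by blast

lemma final_commit_sig_head: "(c, SCommit p l h z) \<in> final_sigs \<Longrightarrow> (p, c) \<in> hash_ops h"
  using exec_inv_commit_sig[OF exec_inv_at] by blast

lemma final_commit_sig_unique:
  assumes sig1: "(c1, SCommit p l1 h1 z1) \<in> final_sigs" and sig2: "(c2, SCommit p l2 h2 z2) \<in> final_sigs"
  shows "c1 = c2 \<and> l1 = l2 \<and> h1 = h2"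
proof -
  have "(c1, SInvoke p c1) \<in> final_sigs" "(c2, SInvoke p c2) \<in> final_sigs"
    using exec_inv_commit_sig[OF exec_inv_at, OF order_refl] sig1 sig2
    unfolding signed_invocations_def by blast+
  then obtain t1 t2 where "t1 < length E" "E ! t1 = Invoke c1 p" "t2 < length E" "E ! t2 = Invoke c2 p"
    using exec_inv_invocation_signed_before[OF exec_inv_at, OF order_refl] by meson
  then have "c1 = c2" using invocation_unique by force
  then show ?thesis using exec_inv_commit_sig_unique[OF exec_inv_at, OF order_refl] sig1 sig2 by blast
qed

lemma trace_eq: "exec_trace = map (\<lambda>t. (E ! t, cst_at t (ev_client (E ! t)), act_at t)) [0..<length E]"
  unfolding trace_eq_config by (simp add: split_beta)

lemma rt_beforeE:
  assumes "rt_before exec_trace p p'"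
  obtains t t' r l h z where "t < t'" "t' < length E" "act_at t = ACommit p r l h z" "act_at t' = AInv p'"
  using assms unfolding rt_before_def resp_at_def inv_at_def trace_eq by auto

lemma commits_in_final:
  assumes "(p, l) \<in> set (commits exec_trace i)"
  obtains h z where "(i, SCommit p l h z) \<in> final_sigs" "final_chain i l = Some h"
proof -
  obtain t where t: "t < length E" "ev_client (E ! t) = i" "commit_of (act_at t) = Some (p, l)"
    using assms unfolding commits_def trace_eq map_filter_map set_map_filter by (auto split: if_splits)
  then obtain r h z where "act_at t = ACommit p r l h z" by (cases "act_at t") auto
  then show ?thesis using that commit_in_final t by metis
qed

lemma confs_nth_in_final:
  assumes "a < length (confs exec_trace k)" "confs exec_trace k ! a = (p, q, j)"
  obtains h z where "(j, SCommit p q h z) \<in> final_sigs" "final_chain k q = Some h"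
proof -
  have "(p, q, j) \<in> set (confs exec_trace k)" using assms nth_mem by metis
  then obtain t where t: "t < length E" "ev_client (E ! t) = k" "conf_of (act_at t) = Some (p, q, j)"
    unfolding confs_def trace_eq map_filter_map set_map_filter by (auto split: if_splits)
  then have "act_at t = AConfirm p q j" by (cases "act_at t") auto
  then show ?thesis using that confirm_in_final t by metis
qed

lemma confs_sorted: "sorted (map (fst \<circ> snd) (confs exec_trace k))"
proof -
  define g where "g t = (if ev_client (E ! t) = k then conf_of (act_at t) else None)" for t
  have "sorted (map (\<lambda>x. fst (snd x)) (List.map_filter g [0..<m])) \<and>
      (\<forall>x \<in> set (List.map_filter g [0..<m]). fst (snd x) \<le> cc (cst_at m k))" if "m \<le> length E" for m
    using that
  proof (induction m)
    case (Suc m)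
    then have m: "m < length E" by simp
    have grows: "cc (cst_at m k) \<le> cc (cst_at (Suc m) k)" using cc_at_Suc_mono[OF m] .
    have IH: "sorted (map (\<lambda>x. fst (snd x)) (List.map_filter g [0..<m]))"
      "\<forall>x \<in> set (List.map_filter g [0..<m]). fst (snd x) \<le> cc (cst_at m k)"
      using Suc m by simp_all
    show ?case
    proof (cases "g m")
      case None
      then show ?thesis using IH grows by (auto simp: map_filter_append)
    next
      case (Some y)
      then obtain p q j where "ev_client (E ! m) = k" "act_at m = AConfirm p q j" "y = (p, q, j)"
        unfolding g_def by (cases "act_at m") (auto split: if_splits)
      moreover from this have "q = Suc (cc (cst_at m k))" "cc (cst_at (Suc m) k) = q"
        using act_at_confirm[OF m] by auto
      ultimately show ?thesis using IH Some by (auto simp: map_filter_append sorted_append)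
    qed
  qed simp
  moreover have "confs exec_trace k = List.map_filter g [0..<length E]"
    unfolding confs_def trace_eq map_filter_map g_def by (simp add: comp_def)
  ultimately show ?thesis by (simp add: comp_def)
qed

lemma confs_seq_mono:
  assumes "a \<le> b" "b < length (confs exec_trace k)"
    "confs exec_trace k ! a = (p, q, j)" "confs exec_trace k ! b = (p', q', j')"
  shows "q \<le> q'"
proof -
  have "map (fst \<circ> snd) (confs exec_trace k) ! a \<le> map (fst \<circ> snd) (confs exec_trace k) ! b"
    using sorted_nth_mono[OF confs_sorted assms(1)] assms(2) by simp
  then show ?thesis using assms by (metis comp_apply fst_conv le_less_trans length_map nth_map snd_conv)
qed

subsection \<open>Real-time order\<close>

lemma commit_hash_excludes_later_invocations:
  assumes "t < t'" "t' < length E" "act_at t = ACommit p r l0 h0 z0" "act_at t' = AInv p'"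
    and sig: "(c, SCommit p l h z) \<in> final_sigs"
  shows "(p', j) \<notin> hash_ops h"
proof
  assume p'_in: "(p', j) \<in> hash_ops h"
  have t: "Suc t \<le> length E" using assms(1,2) by simp
  have sig0: "(ev_client (E ! t), SCommit p l0 h0 z0) \<in> sigs_at (Suc t)"
    using act_at_commit assms(1-3) by simp
  then have "h = h0"
    using final_commit_sig_unique[OF sig] sigs_at_mono[OF t] by blast
  then have "(j, SInvoke p' j) \<in> sigs_at (Suc t)"
    using exec_inv_commit_sig[OF exec_inv_at[OF t] sig0] p'_in unfolding signed_invocations_def by blast
  then obtain t0 where "t0 < Suc t" "E ! t0 = Invoke j p'"
    using exec_inv_invocation_signed_before[OF exec_inv_at[OF t]] by blast
  moreover obtain i where "E ! t' = Invoke i p'" using act_at_invoke assms(4) by blast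
  ultimately show False using invocation_unique[of t0 t'] assms(1,2) by fastforce
qed

lemma rt_before_excludes_from_commit_hash:
  "rt_before exec_trace p p' \<Longrightarrow> (c, SCommit p l h z) \<in> final_sigs \<Longrightarrow> (p', j) \<notin> hash_ops h"
  by (elim rt_beforeE) (rule commit_hash_excludes_later_invocations)

lemma rt_before_commit_order:
  assumes rt: "rt_before exec_trace p p'"
    and "(p, l) \<in> set (commits exec_trace i)" "(p', l') \<in> set (commits exec_trace i)"
  shows "l < l'"
proof (rule ccontr)
  assume "\<not> l < l'"
  obtain h z where sig: "(i, SCommit p l h z) \<in> final_sigs" and h: "final_chain i l = Some h"
    using commits_in_final assms(2) by blast
  obtain h' z' where sig': "(i, SCommit p' l' h' z') \<in> final_sigs" and h': "final_chain i l' = Some h'"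
    using commits_in_final assms(3) by blast
  have "(p', i) \<in> hash_ops h"
    using final_commit_sig_head[OF sig'] final_chain_prefix_ops[OF h h'] \<open>\<not> l < l'\<close> by auto
  then show False using rt_before_excludes_from_commit_hash[OF rt sig] by blast
qed

lemma rt_before_confirm_order:
  assumes rt: "rt_before exec_trace p p'"
    and a: "a < length (confs exec_trace k)" "fst (confs exec_trace k ! a) = p"
    and b: "b < length (confs exec_trace k)" "fst (confs exec_trace k ! b) = p'"
  shows "a < b"
proof (rule ccontr)
  assume "\<not> a < b"
  obtain qa ja qb jb where ca: "confs exec_trace k ! a = (p, qa, ja)" and cb: "confs exec_trace k ! b = (p', qb, jb)"
    using a(2) b(2) by (metis prod.collapse)
  have "qb \<le> qa" using confs_seq_mono[OF _ a(1) cb ca] \<open>\<not> a < b\<close> by simp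
  obtain ha za where sa: "(ja, SCommit p qa ha za) \<in> final_sigs" "final_chain k qa = Some ha"
    using confs_nth_in_final[OF a(1) ca] by blast
  obtain hb zb where sb: "(jb, SCommit p' qb hb zb) \<in> final_sigs" "final_chain k qb = Some hb"
    using confs_nth_in_final[OF b(1) cb] by blast
  have "(p', jb) \<in> hash_ops ha"
    using final_commit_sig_head[OF sb(1)] final_chain_prefix_ops[OF sa(2) sb(2) \<open>qb \<le> qa\<close>] by auto
  then show False using rt_before_excludes_from_commit_hash[OF rt sa(1)] by blast
qed

lemma rt_before_not_committed_after_confirmed:
  assumes rt: "rt_before exec_trace p p'"
    and pm: "(pm, l) \<in> set (commits exec_trace i)"
    and m: "m < length (confs exec_trace k)" "fst (confs exec_trace k ! m) = pm"
    and later: "(p, lp) \<in> set (commits exec_trace i)" "l < lp"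
    and b: "b \<le> m" "fst (confs exec_trace k ! b) = p'"
  shows False
proof -
  obtain qm jm qb jb where cm: "confs exec_trace k ! m = (pm, qm, jm)" and cb: "confs exec_trace k ! b = (p', qb, jb)"
    using m(2) b(2) by (metis prod.collapse)
  obtain hm zm where sm: "(i, SCommit pm l hm zm) \<in> final_sigs" "final_chain i l = Some hm"
    using commits_in_final pm by blast
  obtain hq zq where sq: "(jm, SCommit pm qm hq zq) \<in> final_sigs" "final_chain k qm = Some hq"
    using confs_nth_in_final[OF m(1) cm] by blast
  have "qm = l" "hq = hm" using final_commit_sig_unique[OF sq(1) sm(1)] by simp_all
  have "qb \<le> qm" using confs_seq_mono[OF b(1) m(1) cb cm] .
  have "b < length (confs exec_trace k)" using b(1) m(1) by simp
  then obtain hb zb where sb: "(jb, SCommit p' qb hb zb) \<in> final_sigs" "final_chain k qb = Some hb"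
    using confs_nth_in_final cb by blast
  obtain hp zp where sp: "(i, SCommit p lp hp zp) \<in> final_sigs" "final_chain i lp = Some hp"
    using commits_in_final later(1) by blast
  have "(p', jb) \<in> hash_ops hb" using final_commit_sig_head[OF sb(1)] .
  also have "hash_ops hb \<subseteq> hash_ops hm"
    using final_chain_prefix_ops[OF sq(2) sb(2) \<open>qb \<le> qm\<close>] \<open>hq = hm\<close> by simp
  also have "hash_ops hm \<subseteq> hash_ops hp"
    using final_chain_prefix_ops[OF sp(2) sm(2)] later(2) by simp
  finally show False using rt_before_excludes_from_commit_hash[OF rt sp(1)] by blast
qed

lemma confirmed_prefix_respects_real_time:
  assumes rt: "rt_before exec_trace p p'"
    and pm: "(pm, l) \<in> set (commits exec_trace i)" and confirmed: "pm \<in> set (map fst (confs exec_trace k))"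
    and \<pi>: "\<pi> = (takeWhile (\<lambda>x. x \<noteq> pm) (map fst (confs exec_trace k)) @ [pm])
               @ map fst (sort_key snd (filter (\<lambda>(p', l'). l < l') (commits exec_trace i)))"
    and p: "p \<in> set \<pi>" and p': "p' \<in> set \<pi>"
  shows "appears_before \<pi> p p'"
proof -
  let ?cs = "confs exec_trace k" and ?B = "filter (\<lambda>(p', l'). l < l') (commits exec_trace i)"
  define m where "m = length (takeWhile (\<lambda>x. x \<noteq> pm) (map fst ?cs))"
  let ?\<alpha> = "take (Suc m) (map fst ?cs)" and ?\<beta> = "map fst (sort_key snd ?B)"
  have m: "m < length ?cs" "fst (?cs ! m) = pm" and \<pi>: "\<pi> = ?\<alpha> @ ?\<beta>"
    using takeWhile_neq_snoc[OF confirmed] \<pi> unfolding m_def by auto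
  have in_\<alpha>: "\<exists>a \<le> m. fst (?cs ! a) = x" if "x \<in> set ?\<alpha>" for x
    using that m(1) by (auto simp: in_set_conv_nth less_Suc_eq_le)
  have in_\<beta>: "\<exists>lx. (x, lx) \<in> set ?B" if "x \<in> set ?\<beta>" for x
    using that by force
  consider (\<alpha>\<alpha>) "p \<in> set ?\<alpha>" "p' \<in> set ?\<alpha>" | (\<alpha>\<beta>) "p \<in> set ?\<alpha>" "p' \<in> set ?\<beta>"
    | (\<beta>\<alpha>) "p \<in> set ?\<beta>" "p' \<in> set ?\<alpha>" | (\<beta>\<beta>) "p \<in> set ?\<beta>" "p' \<in> set ?\<beta>"
    using p p' unfolding \<pi> by auto
  then show ?thesis
  proof cases
    case \<alpha>\<alpha>
    then obtain a b where a: "a \<le> m" "fst (?cs ! a) = p" and b: "b \<le> m" "fst (?cs ! b) = p'"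
      using in_\<alpha> by blast
    have "a < b" using rt_before_confirm_order[OF rt _ a(2) _ b(2)] a(1) b(1) m(1) by simp
    then have "appears_before ?\<alpha> p p'"
      unfolding appears_before_def using a b m(1) by (intro exI[of _ a] exI[of _ b]) simp
    then show ?thesis unfolding \<pi> by (rule appears_before_append_left)
  next
    case \<alpha>\<beta>
    then show ?thesis unfolding \<pi> by (rule appears_before_append_across)
  next
    case \<beta>\<alpha>
    then obtain lp b where "(p, lp) \<in> set ?B" "b \<le> m" "fst (?cs ! b) = p'"
      using in_\<alpha> in_\<beta> by blast
    then show ?thesis using rt_before_not_committed_after_confirmed[OF rt pm m] by auto
  next
    case \<beta>\<beta>
    then obtain lp lp' where "(p, lp) \<in> set ?B" "(p', lp') \<in> set ?B" using in_\<beta> by blast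
    moreover from this have "lp < lp'" using rt_before_commit_order[OF rt] by auto
    ultimately have "appears_before ?\<beta> p p'" by (rule appears_before_sort_key)
    then show ?thesis unfolding \<pi> by (rule appears_before_append_right)
  qed
qed

end

theorem lemma5:
  fixes F :: "'s \<Rightarrow> 'op \<Rightarrow> 's \<times> 'r" and s0 :: 's and n :: nat
    and E :: "'op ev list" and i :: nat and \<pi> :: "'op list"
  assumes "well_formed n E (trace F s0 E)"
    and "i \<in> {1..n}"
    and "pi_seq (trace F s0 E) i \<pi>"
  shows "\<forall>p \<in> set \<pi>. \<forall>p' \<in> set \<pi>. rt_before (trace F s0 E) p p' \<longrightarrow> appears_before \<pi> p p'"
proof (intro ballI impI)
  interpret cop_execution F s0 E
    using assms(1) by unfold_locales (simp add: well_formed_def)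
  fix p p' assume p: "p \<in> set \<pi>" and p': "p' \<in> set \<pi>" and rt: "rt_before exec_trace p p'"
  consider (confirmed) pm l k where "(pm, l) \<in> set (commits exec_trace i)"
      "pm \<in> set (map fst (confs exec_trace k))"
      "\<pi> = (takeWhile (\<lambda>x. x \<noteq> pm) (map fst (confs exec_trace k)) @ [pm])
              @ map fst (sort_key snd (filter (\<lambda>(p', l'). l < l') (commits exec_trace i)))"
    | (unconfirmed) "\<pi> = map fst (sort_key snd (commits exec_trace i))"
    using assms(3) unfolding pi_seq_def conf_commits_def confirmed_by_def by blast
  then show "appears_before \<pi> p p'"
  proof cases
    case confirmed
    then show ?thesis using confirmed_prefix_respects_real_time[OF rt] p p' by blast
  next
    case unconfirmed
    then obtain l l' where "(p, l) \<in> set (commits exec_trace i)" "(p', l') \<in> set (commits exec_trace i)"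
      using p p' by auto
    moreover from this have "l < l'" using rt_before_commit_order[OF rt] by blast
    ultimately show ?thesis unfolding unconfirmed by (rule appears_before_sort_key)
  qed
qed

end
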